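(* Let $S=\{\alpha_i^l: i\in[\![d]\!],\ 1\le l\le k-1\}$. For any coloring $\Gamma$ and $k$-ordering $\Omega$ of $T_{d,k}$ with root $\mathcal T$, the map $g\mapsto g.\mathcal T$ is a graph isomorphism from the Cayley graph $\mathrm{Cay}(G_{d,k};S)$ (vertex set $G_{d,k}$, edges $\{g,sg\}$, $s\in S$) onto the line graph of $T_{d,k}$.
   Context: Fix $d,k\ge1$, $[\![d]\!]=\{0,\dots,d\}$. $G_{d,k}=\langle\alpha_0,\dots,\alpha_d\mid\alpha_i^k=e\rangle$ is the free product of $d+1$ cyclic groups of order $k$. The arboreal complex $T_{d,k}$: start from a single $d$-simplex $\mathcal T$, attach to each of its $(d-1)$-faces $k-1$ new $d$-simplices each using a new vertex, and inductively attach to each $(d-1)$-face created in the previous step $k-1$ new $d$-simplices each using a new vertex; $T_{d,k}$ is the union. The line graph of $T_{d,k}$ has the $d$-cells as vertices, two distinct $d$-cells adjacent iff they share a $(d-1)$-cell. A coloring $\Gamma$ is a map from vertices to $[\![d]\!]$ injective on each $d$-cell, extended to cells by $\Gamma(\sigma)=\{\Gamma(v):v\in\sigma\}$. A $k$-ordering $\Omega$ assigns to each $(d-1)$-cell $\sigma$ a homomorphism $\Omega_\sigma:\mathbb Z/k\mathbb Z\to\mathrm{Sym}(\delta(\sigma))$ with transitive image, $\delta(\sigma)$ the set of $d$-cells containing $\sigma$. Left action on $d$-cells: $\alpha_i^l.\tau=\Omega_\sigma(l).\tau$ where $\sigma$ is the $(d-1)$-face of $\tau$ of color $[\![d]\!]\setminus\{i\}$,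 extended to words letter by letter (right-most first); this is a well-defined action of $G_{d,k}$. *)

theory Defs
  imports "HOL-Library.FSet" "HOL-Algebra.Elementary_Groups" "HOL-Algebra.Bij"
begin

text \<open>Vertices: the d+1 vertices of the root simplex, and new vertices.  The new vertex
  New s j is the j-th new vertex (1 <= j <= k-1) attached to the (d-1)-face s.\<close>
datatype vtx = Root nat | New "vtx fset" nat

definition root_simplex :: "nat \<Rightarrow> vtx fset" where
  "root_simplex d = Root |`| fset_of_list [0..<Suc d]"

text \<open>Faces to which new simplices get attached: the (d-1)-faces of the root simplex, and
  inductively the (d-1)-faces created in the previous step, i.e. the (d-1)-faces of a newly
  attached simplex containing its new vertex.\<close>
inductive ext_face :: "nat \<Rightarrow> nat \<Rightarrow> vtx fset \<Rightarrow> bool" for d k where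
  ext_root: "u |\<in>| root_simplex d \<Longrightarrow> ext_face d k (root_simplex d |-| {|u|})"
| ext_step: "ext_face d k s \<Longrightarrow> 1 \<le> j \<Longrightarrow> j \<le> k - 1 \<Longrightarrow> u |\<in>| s \<Longrightarrow>
      ext_face d k (finsert (New s j) (s |-| {|u|}))"

inductive dcell :: "nat \<Rightarrow> nat \<Rightarrow> vtx fset \<Rightarrow> bool" for d k where
  cell_root: "dcell d k (root_simplex d)"
| cell_new: "ext_face d k s \<Longrightarrow> 1 \<le> j \<Longrightarrow> j \<le> k - 1 \<Longrightarrow> dcell d k (finsert (New s j) s)"

definition vertices :: "nat \<Rightarrow> nat \<Rightarrow> vtx set" where
  "vertices d k = {v. \<exists>t. dcell d k t \<and> v |\<in>| t}"

definition dm1cell :: "nat \<Rightarrow> nat \<Rightarrow> vtx fset \<Rightarrow> bool" where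
  "dm1cell d k s \<longleftrightarrow> (\<exists>t. dcell d k t \<and> s |\<subseteq>| t \<and> fcard s = d)"

definition delta :: "nat \<Rightarrow> nat \<Rightarrow> vtx fset \<Rightarrow> vtx fset set" where
  "delta d k s = {t. dcell d k t \<and> s |\<subseteq>| t}"

definition line_adj :: "nat \<Rightarrow> nat \<Rightarrow> vtx fset \<Rightarrow> vtx fset \<Rightarrow> bool" where
  "line_adj d k t t' \<longleftrightarrow> dcell d k t \<and> dcell d k t' \<and> t \<noteq> t' \<and>
     (\<exists>s. dm1cell d k s \<and> s |\<subseteq>| t \<and> s |\<subseteq>| t')"

definition coloring :: "nat \<Rightarrow> nat \<Rightarrow> (vtx \<Rightarrow> nat) \<Rightarrow> bool" where
  "coloring d k \<Gamma> \<longleftrightarrow> (\<forall>v \<in> vertices d k. \<Gamma> v \<le> d) \<and>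
     (\<forall>t. dcell d k t \<longrightarrow> inj_on \<Gamma> (fset t))"

definition k_ordering :: "nat \<Rightarrow> nat \<Rightarrow> (vtx fset \<Rightarrow> int \<Rightarrow> vtx fset \<Rightarrow> vtx fset) \<Rightarrow> bool" where
  "k_ordering d k \<Omega> \<longleftrightarrow> (\<forall>s. dm1cell d k s \<longrightarrow>
     \<Omega> s \<in> hom (integer_mod_group k) (BijGroup (delta d k s)) \<and>
     (\<forall>t \<in> delta d k s. \<forall>t' \<in> delta d k s. \<exists>l \<in> carrier (integer_mod_group k). \<Omega> s l t = t'))"

text \<open>Elements of the free product G_{d,k} of d+1 cyclic groups of order k, represented by
  their reduced words: a list [(i1,l1),...,(in,ln)] stands for
  alpha_{i1}^{l1} ... alpha_{in}^{ln}, with i <= d, 1 <= l <= k-1, consecutive i distinct.\<close>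
definition Gdk :: "nat \<Rightarrow> nat \<Rightarrow> (nat \<times> nat) list set" where
  "Gdk d k = {w. (\<forall>(i,l) \<in> set w. i \<le> d \<and> 1 \<le> l \<and> l \<le> k - 1) \<and>
                  successively (\<lambda>a b. fst a \<noteq> fst b) w}"

text \<open>Left multiplication of a reduced word by the generator power alpha_i^l.\<close>
fun gmult :: "nat \<Rightarrow> nat \<times> nat \<Rightarrow> (nat \<times> nat) list \<Rightarrow> (nat \<times> nat) list" where
  "gmult k (i,l) [] = (if l mod k = 0 then [] else [(i, l mod k)])"
| "gmult k (i,l) ((j,m) # w) =
     (if i = j then (if (l + m) mod k = 0 then w else (i, (l + m) mod k) # w)
      else if l mod k = 0 then (j,m) # w else (i, l mod k) # (j,m) # w)"

definition gens :: "nat \<Rightarrow> nat \<Rightarrow> (nat \<times> nat) set" where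
  "gens d k = {(i,l). i \<le> d \<and> 1 \<le> l \<and> l \<le> k - 1}"

definition cay_adj :: "nat \<Rightarrow> nat \<Rightarrow> (nat \<times> nat) list \<Rightarrow> (nat \<times> nat) list \<Rightarrow> bool" where
  "cay_adj d k g h \<longleftrightarrow> g \<in> Gdk d k \<and> h \<in> Gdk d k \<and> (\<exists>s \<in> gens d k. h = gmult k s g)"

definition face_col :: "(vtx \<Rightarrow> nat) \<Rightarrow> vtx fset \<Rightarrow> nat \<Rightarrow> vtx fset" where
  "face_col \<Gamma> t i = ffilter (\<lambda>v. \<Gamma> v \<noteq> i) t"

definition gen_act :: "(vtx \<Rightarrow> nat) \<Rightarrow> (vtx fset \<Rightarrow> int \<Rightarrow> vtx fset \<Rightarrow> vtx fset) \<Rightarrow>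
    nat \<times> nat \<Rightarrow> vtx fset \<Rightarrow> vtx fset" where
  "gen_act \<Gamma> \<Omega> a t = \<Omega> (face_col \<Gamma> t (fst a)) (int (snd a)) t"

text \<open>Action of a word, letter by letter, right-most letter first.\<close>
definition word_act :: "(vtx \<Rightarrow> nat) \<Rightarrow> (vtx fset \<Rightarrow> int \<Rightarrow> vtx fset \<Rightarrow> vtx fset) \<Rightarrow>
    (nat \<times> nat) list \<Rightarrow> vtx fset \<Rightarrow> vtx fset" where
  "word_act \<Gamma> \<Omega> w t = foldr (gen_act \<Gamma> \<Omega>) w t"

end

theory Submission
  imports Defs
begin

text \<open>By induction on w, cell w is a d-cell and, for every color i
  other than that of the first letter of w, it is the cell from which its face of color i was cut
  in the construction of T_{d,k}. Such a face lies in exactly k d-cells, so the transitive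
  k-ordering acts on them regularly; hence prepending alpha_i^l with 1 <= l <= k-1 leads to one
  of the k-1 cells attached to that face, whose new vertex has color i. Consequently the k cells
  around the face of color i of cell w are the cells of the words alpha_i^m w, m < k. This gives
  surjectivity by induction on the construction and the correspondence of adjacencies, while
  injectivity follows because the new vertex of cell ((i,l) # w) and its color determine i and
  the face, the face determines its parent cell w, and regularity determines l.\<close>

abbreviation new_cell :: "vtx fset \<Rightarrow> nat \<Rightarrow> vtx fset" where
  "new_cell s j \<equiv> finsert (New s j) s"

lemma size_less_New: "v |\<in>| s \<Longrightarrow> size v < size (New s j)"
proof -
  assume "v |\<in>| s"
  hence "Suc (size v) \<le> (\<Sum>x\<in>fset s. Suc (size x))"
    by (intro member_le_sum) auto
  thus ?thesis by simp
qed

lemma New_notin: "New s j |\<notin>| s"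
  using size_less_New by blast

lemma New_mem_cycle: "New a ja |\<in>| b \<Longrightarrow> New b jb |\<in>| a \<Longrightarrow> False"
  using size_less_New by (metis less_asym)

lemma new_cell_inject: "new_cell a ja = new_cell b jb \<Longrightarrow> a = b \<and> ja = jb"
  by (metis finsertE New_notin New_mem_cycle finsertI1 vtx.inject)

lemma mem_root_simplex: "v |\<in>| root_simplex d \<longleftrightarrow> (\<exists>n\<le>d. v = Root n)"
  unfolding root_simplex_def by (auto simp: fset_of_list.rep_eq)

lemma New_notin_root_simplex: "New s j |\<notin>| root_simplex d"
  by (simp add: mem_root_simplex)

lemma fcard_root_simplex: "fcard (root_simplex d) = Suc d"
proof -
  have "fset (root_simplex d) = Root ` {0..<Suc d}"
    unfolding root_simplex_def by (auto simp: fset_of_list.rep_eq)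
  moreover have "inj_on Root {0..<Suc d}" by (auto simp: inj_on_def)
  ultimately show ?thesis by (simp add: fcard.rep_eq card_image)
qed

lemma fcard_ext_face: "ext_face d k s \<Longrightarrow> fcard s = d"
proof (induction rule: ext_face.induct)
  case (ext_root u)
  then show ?case using fcard_root_simplex[of d]
    by (simp add: fcard.rep_eq card_Diff_singleton)
next
  case (ext_step s j u)
  have "fcard (finsert (New s j) (s |-| {|u|})) = Suc (fcard (s |-| {|u|}))"
    using New_notin by (simp add: fcard_finsert_disjoint)
  moreover have "fcard (s |-| {|u|}) = fcard s - 1" using ext_step
    by (simp add: fcard.rep_eq card_Diff_singleton)
  moreover have "fcard s \<ge> 1" using ext_step
    by (auto simp: fcard.rep_eq Suc_le_eq card_gt_0_iff)
  ultimately show ?case using ext_step by simp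
qed

lemma fcard_dcell: "dcell d k t \<Longrightarrow> fcard t = Suc d"
  by (induction rule: dcell.induct)
    (simp_all add: fcard_root_simplex fcard_ext_face New_notin fcard_finsert_disjoint)

lemma new_cell_mem_delta: "ext_face d k s \<Longrightarrow> 1 \<le> j \<Longrightarrow> j \<le> k-1 \<Longrightarrow> new_cell s j \<in> delta d k s"
  using cell_new by (simp add: delta_def fsubset_finsertI)

lemma ext_face_subset_eq:
  "ext_face d k s \<Longrightarrow> ext_face d k s' \<Longrightarrow> s |\<subseteq>| s' \<Longrightarrow> s = s'"
  by (metis fcard_ext_face fcard_seteq order_refl)

lemma delta_ext_root_subset:
  assumes "u |\<in>| root_simplex d"
  defines "s \<equiv> root_simplex d |-| {|u|}"
  shows "delta d k s \<subseteq> insert (root_simplex d) (new_cell s ` {1..k-1})"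
proof
  fix t assume "t \<in> delta d k s"
  then have t: "dcell d k t" "s |\<subseteq>| t" by (auto simp: delta_def)
  from t(1) show "t \<in> insert (root_simplex d) (new_cell s ` {1..k-1})"
  proof cases
    case (cell_new s' j')
    have "s |\<subseteq>| s'" using t(2) cell_new New_notin_root_simplex by (auto simp: s_def)
    then have "s = s'" using cell_new(2) ext_root[OF assms(1)] ext_face_subset_eq s_def by blast
    then show ?thesis using cell_new by auto
  qed simp
qed

lemma delta_ext_step_subset:
  fixes j0 :: nat
  assumes "ext_face d k s0" "u |\<in>| s0"
  defines "s \<equiv> finsert (New s0 j0) (s0 |-| {|u|})"
  assumes "ext_face d k s"
  shows "delta d k s \<subseteq> insert (new_cell s0 j0) (new_cell s ` {1..k-1})"
proof
  fix t assume "t \<in> delta d k s"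
  then have t: "dcell d k t" "s |\<subseteq>| t" by (auto simp: delta_def)
  then have "New s0 j0 |\<in>| t" by (simp add: s_def)
  with t(1) show "t \<in> insert (new_cell s0 j0) (new_cell s ` {1..k-1})"
  proof cases
    case cell_root
    then show ?thesis using \<open>New s0 j0 |\<in>| t\<close> New_notin_root_simplex by blast
  next
    case (cell_new s' j')
    show ?thesis
    proof (cases "s = s'")
      case False
      then have "New s' j' |\<in>| s"
        using t(2) cell_new assms(4) ext_face_subset_eq by (metis fsubset_finsert)
      then show ?thesis
        using \<open>New s0 j0 |\<in>| t\<close> cell_new New_mem_cycle by (auto simp: s_def)
    qed (use cell_new in auto)
  qed
qed

lemma delta_ext_face:
  assumes "ext_face d k s"
  obtains P where "delta d k s = insert P (new_cell s ` {1..k-1})" and "\<forall>j. P \<noteq> new_cell s j"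
proof -
  have children: "new_cell s ` {1..k-1} \<subseteq> delta d k s" using new_cell_mem_delta assms by auto
  from assms show ?thesis
  proof cases
    case (ext_root u)
    have "delta d k s \<subseteq> insert (root_simplex d) (new_cell s ` {1..k-1})"
      using delta_ext_root_subset[OF ext_root(2)] ext_root(1) by simp
    moreover have "root_simplex d \<in> delta d k s" using ext_root cell_root by (auto simp: delta_def)
    ultimately have "delta d k s = insert (root_simplex d) (new_cell s ` {1..k-1})"
      using children by (intro subset_antisym) auto
    moreover have "\<forall>j. root_simplex d \<noteq> new_cell s j"
      using New_notin_root_simplex by (metis finsertI1)
    ultimately show ?thesis by (rule that)
  next
    case (ext_step s0 j0 u)
    have "delta d k s \<subseteq> insert (new_cell s0 j0) (new_cell s ` {1..k-1})"
      using delta_ext_step_subset[of d k s0 u j0] ext_step assms by simp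
    moreover have "new_cell s0 j0 \<in> delta d k s"
      using ext_step new_cell_mem_delta by (auto simp: delta_def)
    ultimately have "delta d k s = insert (new_cell s0 j0) (new_cell s ` {1..k-1})"
      using children by (intro subset_antisym) auto
    moreover have "\<forall>j. new_cell s0 j0 \<noteq> new_cell s j"
      using ext_step New_notin new_cell_inject by (metis finsertI1)
    ultimately show ?thesis by (rule that)
  qed
qed

text \<open>The parent cell of a face s is the d-cell it was cut from: the unique d-cell through s
  other than the k-1 cells attached to s.\<close>
definition parent_cell :: "nat \<Rightarrow> nat \<Rightarrow> vtx fset \<Rightarrow> vtx fset \<Rightarrow> bool" where
  "parent_cell d k s t \<longleftrightarrow> ext_face d k s \<and> t \<in> delta d k s \<and> (\<forall>j. t \<noteq> new_cell s j)"

lemma parent_cell_delta: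
  assumes "parent_cell d k s t"
  shows "delta d k s = insert t (new_cell s ` {1..k-1})"
proof -
  obtain P where P: "delta d k s = insert P (new_cell s ` {1..k-1})" "\<forall>j. P \<noteq> new_cell s j"
    using delta_ext_face assms unfolding parent_cell_def by blast
  then have "t = P" using assms unfolding parent_cell_def by blast
  with P show ?thesis by simp
qed

lemma parent_cell_dm1cell: "parent_cell d k s t \<Longrightarrow> dm1cell d k s"
  using fcard_ext_face unfolding parent_cell_def dm1cell_def delta_def by blast

lemma parent_cell_unique: "parent_cell d k s t \<Longrightarrow> parent_cell d k s t' \<Longrightarrow> t = t'"
  using parent_cell_delta unfolding parent_cell_def by blast

lemma card_delta:
  assumes "parent_cell d k s t" and "k \<ge> 1"
  shows "card (delta d k s) = k"
proof -
  have "inj_on (new_cell s) {1..k-1}" by (auto simp: inj_on_def dest: new_cell_inject)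
  moreover have "t \<notin> new_cell s ` {1..k-1}" using assms unfolding parent_cell_def by blast
  ultimately show ?thesis using parent_cell_delta[OF assms(1)] assms(2) by (simp add: card_image)
qed

abbreviation can_prepend :: "nat \<Rightarrow> (nat \<times> nat) list \<Rightarrow> bool" where
  "can_prepend i w \<equiv> w = [] \<or> fst (hd w) \<noteq> i"

lemma Nil_mem_Gdk [simp]: "[] \<in> Gdk d k"
  by (simp add: Gdk_def)

lemma Cons_mem_Gdk:
  "(i,l) # w \<in> Gdk d k \<longleftrightarrow> i \<le> d \<and> 1 \<le> l \<and> l \<le> k-1 \<and> w \<in> Gdk d k \<and> can_prepend i w"
  unfolding Gdk_def by (cases w) auto

lemma gmult_prepend:
  "can_prepend i w \<Longrightarrow> gmult k (i,l) w = (if l mod k = 0 then w else (i, l mod k) # w)"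
  by (cases w) auto

lemma gmult_Cons_same: "can_prepend i w \<Longrightarrow> gmult k (i,l) ((i,m) # w) = gmult k (i, l + m) w"
  by (simp add: gmult_prepend)

lemma gmult_mod: "gmult k (i, l mod k) w = gmult k (i,l) w"
proof (cases "can_prepend i w")
  case False
  then obtain m w' where "w = (i,m) # w'" by (cases w) auto
  then show ?thesis by (simp add: mod_add_left_eq)
qed (simp add: gmult_prepend)

lemma gmult_mem_Gdk:
  assumes "k \<ge> 1" "i \<le> d" "w \<in> Gdk d k"
  shows "gmult k (i,l) w \<in> Gdk d k"
proof -
  have mod_le: "n mod k \<le> k - 1" for n using mod_less_divisor[of k n] assms(1) by linarith
  show ?thesis
  proof (cases "can_prepend i w")
    case False
    then obtain m w' where "w = (i,m) # w'" by (cases w) auto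
    then show ?thesis using assms mod_le by (auto simp: gmult_prepend gmult_Cons_same Cons_mem_Gdk)
  qed (use assms mod_le in \<open>auto simp: gmult_prepend Cons_mem_Gdk\<close>)
qed

lemma add_mod_eq_right_iff:
  fixes l m k :: nat
  assumes "m < k"
  shows "(l + m) mod k = m \<longleftrightarrow> l mod k = 0"
proof -
  have "(l + m) mod k = m \<longleftrightarrow> m mod k = (l + m) mod k" using assms by auto
  also have "\<dots> \<longleftrightarrow> k dvd l" using mod_eq_dvd_iff_nat[of m "l + m" k] by (simp add: eq_commute)
  finally show ?thesis by (simp only: dvd_eq_mod_eq_0)
qed

lemma gmult_eq_self_iff:
  assumes "w \<in> Gdk d k"
  shows "gmult k (i,l) w = w \<longleftrightarrow> l mod k = 0"
proof (cases "can_prepend i w")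
  case True
  then show ?thesis by (simp add: gmult_prepend)
next
  case False
  then obtain m w' where w: "w = (i,m) # w'" by (cases w) auto
  then have "0 < m" "m < k" using assms by (auto simp: Cons_mem_Gdk)
  then show ?thesis using w add_mod_eq_right_iff[of m k l] by auto
qed

lemma mem_face_col [simp]: "v |\<in>| face_col \<Gamma> t i \<longleftrightarrow> v |\<in>| t \<and> \<Gamma> v \<noteq> i"
  unfolding face_col_def by auto

lemma face_col_subset: "face_col \<Gamma> t i |\<subseteq>| t"
  by auto

locale colored_complex =
  fixes d k :: nat and \<Gamma> :: "vtx \<Rightarrow> nat"
  assumes coloring: "coloring d k \<Gamma>"
begin

abbreviation face :: "vtx fset \<Rightarrow> nat \<Rightarrow> vtx fset" where
  "face t i \<equiv> face_col \<Gamma> t i"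

lemma colors_dcell:
  assumes "dcell d k t"
  shows "\<Gamma> ` fset t = {0..d}"
proof -
  have inj: "inj_on \<Gamma> (fset t)" using coloring assms unfolding coloring_def by blast
  have "\<Gamma> ` fset t \<subseteq> {0..d}"
    using coloring assms unfolding coloring_def vertices_def by fastforce
  moreover have "card (\<Gamma> ` fset t) = Suc d"
    using card_image[OF inj] fcard_dcell[OF assms] by (simp add: fcard.rep_eq)
  ultimately show ?thesis by (simp add: card_subset_eq)
qed

lemma color_eqD: "dcell d k t \<Longrightarrow> u |\<in>| t \<Longrightarrow> v |\<in>| t \<Longrightarrow> \<Gamma> u = \<Gamma> v \<Longrightarrow> u = v"
  using coloring unfolding coloring_def inj_on_def by blast

lemma obtain_color:
  assumes "dcell d k t" "i \<le> d"
  obtains u where "u |\<in>| t" "\<Gamma> u = i"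
  using colors_dcell[OF assms(1)] assms(2) by (metis atLeastAtMost_iff imageE zero_le)

lemma color_le: "dcell d k t \<Longrightarrow> u |\<in>| t \<Longrightarrow> \<Gamma> u \<le> d"
  using colors_dcell by fastforce

lemma face_color: "dcell d k t \<Longrightarrow> u |\<in>| t \<Longrightarrow> face t (\<Gamma> u) = t |-| {|u|}"
  using color_eqD by fastforce

lemma fcard_face:
  assumes "dcell d k t" "i \<le> d"
  shows "fcard (face t i) = d"
proof -
  obtain u where "u |\<in>| t" "\<Gamma> u = i" using obtain_color assms .
  then have "face t i = t |-| {|u|}" using face_color[OF assms(1)] by blast
  with \<open>u |\<in>| t\<close> show ?thesis using fcard_dcell[OF assms(1)]
    by (simp add: fcard.rep_eq card_Diff_singleton)
qed

lemma dm1cell_face: "dcell d k t \<Longrightarrow> i \<le> d \<Longrightarrow> dm1cell d k (face t i)"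
  unfolding dm1cell_def using face_col_subset fcard_face by blast

lemma dm1cell_eq_face:
  assumes "dcell d k t" "dm1cell d k s" "s |\<subseteq>| t"
  obtains i where "i \<le> d" "s = face t i"
proof -
  have fs: "fcard s = d" using assms(2) unfolding dm1cell_def by blast
  then have "fcard s < fcard t" using fcard_dcell[OF assms(1)] by simp
  then obtain u where u: "u |\<in>| t" "u |\<notin>| s" by (metis fcard_mono leD fsubsetI)
  have "s |\<subseteq>| face t (\<Gamma> u)" using face_color[OF assms(1) u(1)] u assms(3) by auto
  moreover have "fcard (face t (\<Gamma> u)) \<le> fcard s"
    using fcard_face[OF assms(1) color_le[OF assms(1) u(1)]] fs by simp
  ultimately show ?thesis using that color_le[OF assms(1) u(1)] by (metis fcard_seteq)
qed

lemma New_color: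
  assumes "dcell d k (new_cell s j)" "i \<le> d" "\<forall>v. v |\<in>| s \<longrightarrow> \<Gamma> v \<noteq> i"
  shows "\<Gamma> (New s j) = i"
proof -
  obtain u where "u |\<in>| new_cell s j" "\<Gamma> u = i" using obtain_color assms(1,2) .
  then show ?thesis using assms(3) by auto
qed

lemma face_new_cell: "dcell d k (new_cell s j) \<Longrightarrow> face (new_cell s j) (\<Gamma> (New s j)) = s"
  using face_color New_notin by fastforce

lemma root_parent_cell:
  assumes "i \<le> d"
  shows "parent_cell d k (face (root_simplex d) i) (root_simplex d)"
proof -
  obtain u where u: "u |\<in>| root_simplex d" "\<Gamma> u = i" using obtain_color cell_root assms .
  then have "face (root_simplex d) i = root_simplex d |-| {|u|}"
    using face_color cell_root by blast
  moreover have "root_simplex d \<noteq> new_cell s j" for s j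
    using New_notin_root_simplex by (metis finsertI1)
  ultimately show ?thesis using ext_root[OF u(1)] cell_root
    unfolding parent_cell_def delta_def by auto
qed

lemma new_cell_parent_cell:
  assumes "ext_face d k s" "1 \<le> j" "j \<le> k-1" "i \<le> d" "\<Gamma> (New s j) \<noteq> i"
  shows "parent_cell d k (face (new_cell s j) i) (new_cell s j)"
proof -
  have cell: "dcell d k (new_cell s j)" using cell_new assms by blast
  obtain u where u: "u |\<in>| new_cell s j" "\<Gamma> u = i" using obtain_color cell assms(4) .
  then have "u \<noteq> New s j" "u |\<in>| s" using assms(5) by auto
  have "face (new_cell s j) i = new_cell s j |-| {|u|}" using face_color[OF cell u(1)] u(2) by simp
  also have "\<dots> = finsert (New s j) (s |-| {|u|})" using \<open>u \<noteq> New s j\<close> by auto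
  finally have face: "face (new_cell s j) i = finsert (New s j) (s |-| {|u|})" .
  have "new_cell s j \<noteq> new_cell (face (new_cell s j) i) j'" for j'
  proof
    assume "new_cell s j = new_cell (face (new_cell s j) i) j'"
    then have "s = face (new_cell s j) i" using new_cell_inject by blast
    then show False using face New_notin by (metis finsertI1)
  qed
  moreover have "new_cell s j \<in> delta d k (face (new_cell s j) i)"
    using cell face_col_subset unfolding delta_def by blast
  moreover have "ext_face d k (face (new_cell s j) i)"
    using ext_step[OF assms(1-3) \<open>u |\<in>| s\<close>] face by simp
  ultimately show ?thesis unfolding parent_cell_def by blast
qed

end

lemma image_add_mod:
  fixes a k :: nat
  assumes "a \<le> k" "0 < k"
  shows "(\<lambda>m. (m + a) mod k) ` {0..<k} = {0..<k}"
proof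
  show "{0..<k} \<subseteq> (\<lambda>m. (m + a) mod k) ` {0..<k}"
  proof
    fix n assume "n \<in> {0..<k}"
    then have "((n + (k - a)) mod k + a) mod k = n"
      using assms(1) by (simp add: mod_add_left_eq)
    then show "n \<in> (\<lambda>m. (m + a) mod k) ` {0..<k}"
      using assms(2) by (metis atLeastLessThan_iff image_eqI mod_less_divisor zero_le)
  qed
qed (use assms in auto)

locale arboreal_action = colored_complex +
  fixes \<Omega> :: "vtx fset \<Rightarrow> int \<Rightarrow> vtx fset \<Rightarrow> vtx fset"
  assumes k_pos: "k \<ge> 1" and ordering: "k_ordering d k \<Omega>"
begin

abbreviation cell :: "(nat \<times> nat) list \<Rightarrow> vtx fset" where
  "cell w \<equiv> word_act \<Gamma> \<Omega> w (root_simplex d)"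

lemma cell_Nil: "cell [] = root_simplex d"
  by (simp add: word_act_def)

lemma cell_Cons: "cell ((i,l) # w) = \<Omega> (face (cell w) i) (int l) (cell w)"
  by (simp add: word_act_def gen_act_def)

lemma orbit_eq_delta:
  assumes "dm1cell d k s" "t \<in> delta d k s"
  shows "(\<lambda>m. \<Omega> s (int m) t) ` {0..<k} = delta d k s" and "\<Omega> s 0 t = t"
proof -
  note ordering_s = ordering[unfolded k_ordering_def, rule_format, OF assms(1)]
  have hom: "\<Omega> s \<in> hom (integer_mod_group k) (BijGroup (delta d k s))"
    using ordering_s by (rule conjunct1)
  have carrier: "carrier (integer_mod_group k) = int ` {0..<k}"
    using k_pos by (simp add: carrier_integer_mod_group image_int_atLeastLessThan)
  show "(\<lambda>m. \<Omega> s (int m) t) ` {0..<k} = delta d k s"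
  proof
    show "(\<lambda>m. \<Omega> s (int m) t) ` {0..<k} \<subseteq> delta d k s"
    proof
      fix t' assume "t' \<in> (\<lambda>m. \<Omega> s (int m) t) ` {0..<k}"
      then obtain m where m: "m < k" "t' = \<Omega> s (int m) t" by auto
      then have "int m \<in> carrier (integer_mod_group k)" using carrier by simp
      then have "\<Omega> s (int m) \<in> carrier (BijGroup (delta d k s))" by (rule hom_in_carrier[OF hom])
      then have "\<Omega> s (int m) \<in> Bij (delta d k s)" by (simp add: BijGroup_def)
      then show "t' \<in> delta d k s" using funcset_mem[OF Bij_imp_funcset] assms(2) m(2) by metis
    qed
    show "delta d k s \<subseteq> (\<lambda>m. \<Omega> s (int m) t) ` {0..<k}"
    proof
      fix t' assume "t' \<in> delta d k s"
      then obtain l where "l \<in> carrier (integer_mod_group k)" "\<Omega> s l t = t'"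
        using conjunct2[OF ordering_s] assms(2) by blast
      then show "t' \<in> (\<lambda>m. \<Omega> s (int m) t) ` {0..<k}" using carrier by auto
    qed
  qed
  have "\<Omega> s 0 = (\<lambda>x \<in> delta d k s. x)"
    using hom_one[OF hom group_integer_mod_group group_BijGroup] by (simp add: BijGroup_def)
  then show "\<Omega> s 0 t = t" using assms(2) by simp
qed

text \<open>Around a constructed face there are exactly k d-cells, so the transitive action of
  the k-ordering there is regular.\<close>
lemma bij_betw_orbit:
  assumes "parent_cell d k s t"
  shows "bij_betw (\<lambda>m. \<Omega> s (int m) t) {0..<k} (delta d k s)" and "\<Omega> s 0 t = t"
proof -
  have "t \<in> delta d k s" using assms unfolding parent_cell_def by blast
  note orbit = orbit_eq_delta[OF parent_cell_dm1cell[OF assms] this]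
  have "card (delta d k s) = card {0..<k}" using card_delta assms k_pos by simp
  then show "bij_betw (\<lambda>m. \<Omega> s (int m) t) {0..<k} (delta d k s)"
    using orbit(1) by (simp add: bij_betw_def eq_card_imp_inj_on)
  show "\<Omega> s 0 t = t" by (rule orbit(2))
qed

lemma cell_Cons_new_cell:
  assumes "parent_cell d k (face (cell w) i) (cell w)" "i \<le> d" "1 \<le> l" "l \<le> k-1"
  obtains j where "cell ((i,l) # w) = new_cell (face (cell w) i) j"
    and "1 \<le> j" "j \<le> k-1" and "\<Gamma> (New (face (cell w) i) j) = i"
proof -
  let ?s = "face (cell w) i" and ?t = "cell w"
  have l: "l < k" "l \<noteq> 0" using assms(3,4) k_pos by auto
  note orbit = bij_betw_orbit[OF assms(1)]
  have mem: "\<Omega> ?s (int l) ?t \<in> delta d k ?s" using bij_betwE[OF orbit(1)] l(1) by simp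
  have "\<Omega> ?s (int l) ?t \<noteq> ?t"
  proof
    assume "\<Omega> ?s (int l) ?t = ?t"
    then have "\<Omega> ?s (int l) ?t = \<Omega> ?s (int 0) ?t" using orbit(2) by simp
    then have "l = 0" by (rule inj_onD[OF bij_betw_imp_inj_on[OF orbit(1)]]) (use l k_pos in auto)
    with l(2) show False by simp
  qed
  then have "\<Omega> ?s (int l) ?t \<in> new_cell ?s ` {1..k-1}"
    using mem parent_cell_delta[OF assms(1)] by blast
  then obtain j where j: "j \<in> {1..k-1}" "\<Omega> ?s (int l) ?t = new_cell ?s j" by blast
  then have "dcell d k (new_cell ?s j)" using mem by (simp add: delta_def)
  then have "\<Gamma> (New ?s j) = i" using New_color assms(2) by simp
  then show ?thesis using that j cell_Cons by simp
qed

lemma reduced_word_cell: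
  "w \<in> Gdk d k \<Longrightarrow> dcell d k (cell w) \<and>
     (\<forall>i \<le> d. can_prepend i w \<longrightarrow> parent_cell d k (face (cell w) i) (cell w))"
proof (induction w)
  case Nil
  show ?case using cell_root root_parent_cell by (simp add: cell_Nil)
next
  case (Cons a w)
  obtain i l where a: "a = (i,l)" by fastforce
  then have w: "i \<le> d" "1 \<le> l" "l \<le> k-1" "w \<in> Gdk d k" "can_prepend i w"
    using Cons.prems by (auto simp: Cons_mem_Gdk)
  then have parent: "parent_cell d k (face (cell w) i) (cell w)" using Cons.IH by blast
  then have face: "ext_face d k (face (cell w) i)" unfolding parent_cell_def by blast
  obtain j where j: "cell (a # w) = new_cell (face (cell w) i) j" "1 \<le> j" "j \<le> k-1"
      "\<Gamma> (New (face (cell w) i) j) = i"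
    using cell_Cons_new_cell[OF parent w(1-3)] a by blast
  have "parent_cell d k (face (cell (a # w)) i') (cell (a # w))" if "i' \<le> d" "i' \<noteq> i" for i'
    using new_cell_parent_cell[OF face j(2,3) that(1)] j(1,4) that(2) by simp
  then show ?case using cell_new[OF face j(2,3)] j(1) a by auto
qed

lemma dcell_cell: "w \<in> Gdk d k \<Longrightarrow> dcell d k (cell w)"
  using reduced_word_cell by blast

lemma parent_cell_cell:
  "w \<in> Gdk d k \<Longrightarrow> i \<le> d \<Longrightarrow> can_prepend i w \<Longrightarrow> parent_cell d k (face (cell w) i) (cell w)"
  using reduced_word_cell by blast

lemma cell_Cons_eq_new_cell:
  assumes "(i,l) # w \<in> Gdk d k"
  obtains j where "cell ((i,l) # w) = new_cell (face (cell w) i) j"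
    and "1 \<le> j" "j \<le> k-1" and "\<Gamma> (New (face (cell w) i) j) = i"
proof -
  have w: "i \<le> d" "1 \<le> l" "l \<le> k-1" "w \<in> Gdk d k" "can_prepend i w"
    using assms by (simp_all add: Cons_mem_Gdk)
  show ?thesis by (rule cell_Cons_new_cell[OF parent_cell_cell[OF w(4,1,5)] w(1-3)]) (rule that)
qed

lemma face_cell_Cons:
  assumes "(i,l) # w \<in> Gdk d k"
  shows "face (cell ((i,l) # w)) i = face (cell w) i"
proof -
  obtain j where j: "cell ((i,l) # w) = new_cell (face (cell w) i) j"
    "\<Gamma> (New (face (cell w) i) j) = i"
    using cell_Cons_eq_new_cell assms by blast
  then have "dcell d k (new_cell (face (cell w) i) j)" using dcell_cell[OF assms] by simp
  from face_new_cell[OF this] show ?thesis using j by simp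
qed

lemma cell_Cons_neq_root:
  assumes "(i,l) # w \<in> Gdk d k"
  shows "cell ((i,l) # w) \<noteq> root_simplex d"
proof -
  obtain j where "cell ((i,l) # w) = new_cell (face (cell w) i) j"
    using cell_Cons_eq_new_cell assms by blast
  then show ?thesis using New_notin_root_simplex by (metis finsertI1)
qed

text \<open>If w starts with alpha_i, the powers of alpha_i applied to w are a rotation of those
  applied to the rest of w.\<close>
lemma delta_face_cell:
  assumes "w \<in> Gdk d k" "i \<le> d"
  shows "delta d k (face (cell w) i) = (\<lambda>m. cell (gmult k (i,m) w)) ` {0..<k}"
proof -
  have prepend: "delta d k (face (cell w) i) = (\<lambda>m. cell (gmult k (i,m) w)) ` {0..<k}"
    if "w \<in> Gdk d k" "can_prepend i w" for w
  proof -
    note orbit = bij_betw_orbit[OF parent_cell_cell[OF that(1) assms(2) that(2)]]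
    have "cell (gmult k (i,m) w) = \<Omega> (face (cell w) i) (int m) (cell w)" if "m < k" for m
      using that orbit(2) \<open>can_prepend i w\<close> by (cases "m = 0") (simp_all add: gmult_prepend cell_Cons)
    then show ?thesis using bij_betw_imp_surj_on[OF orbit(1)] by (auto intro!: image_cong)
  qed
  show ?thesis
  proof (cases "can_prepend i w")
    case False
    then obtain m0 w' where w: "w = (i,m0) # w'" by (cases w) auto
    then have w': "w' \<in> Gdk d k" "can_prepend i w'" "m0 \<le> k" using assms by (auto simp: Cons_mem_Gdk)
    have "gmult k (i,m) w = gmult k (i, (m + m0) mod k) w'" for m
      by (simp only: w gmult_Cons_same[OF w'(2)] gmult_mod)
    then have "(\<lambda>m. cell (gmult k (i,m) w)) ` {0..<k}
        = (\<lambda>m. cell (gmult k (i,m) w')) ` ((\<lambda>m. (m + m0) mod k) ` {0..<k})"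
      by (simp only: image_image)
    also have "\<dots> = delta d k (face (cell w') i)"
      using image_add_mod[OF w'(3)] k_pos prepend[OF w'(1,2)] by simp
    finally show ?thesis using face_cell_Cons assms(1) w by simp
  qed (use prepend assms in blast)
qed

lemma delta_face_cell_subset:
  "w \<in> Gdk d k \<Longrightarrow> i \<le> d \<Longrightarrow> delta d k (face (cell w) i) \<subseteq> cell ` Gdk d k"
  using delta_face_cell gmult_mem_Gdk k_pos by auto

lemma cell_Cons_eq_cell_Cons:
  assumes w: "(i,l) # w \<in> Gdk d k" and v: "(i',l') # v \<in> Gdk d k"
    and eq: "cell ((i,l) # w) = cell ((i',l') # v)"
  shows "i' = i" and "cell v = cell w"
proof -
  obtain j where j: "cell ((i,l) # w) = new_cell (face (cell w) i) j"
    "\<Gamma> (New (face (cell w) i) j) = i"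
    using cell_Cons_eq_new_cell w by blast
  obtain j' where j': "cell ((i',l') # v) = new_cell (face (cell v) i') j'"
    "\<Gamma> (New (face (cell v) i') j') = i'"
    using cell_Cons_eq_new_cell v by blast
  have face: "face (cell w) i = face (cell v) i'" and "j = j'"
    using new_cell_inject j(1) j'(1) eq by metis+
  then show "i' = i" using j(2) j'(2) by simp
  then show "cell v = cell w"
    using parent_cell_unique parent_cell_cell w v face by (metis Cons_mem_Gdk)
qed

lemma cell_Cons_eq_exponent:
  assumes "(i,l) # w \<in> Gdk d k" "(i,l') # w \<in> Gdk d k"
    and "cell ((i,l) # w) = cell ((i,l') # w)"
  shows "l = l'"
proof -
  have w: "i \<le> d" "w \<in> Gdk d k" "can_prepend i w" "l < k" "l' < k"
    using assms(1,2) k_pos by (auto simp: Cons_mem_Gdk)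
  show ?thesis
    using inj_onD[OF bij_betw_imp_inj_on[OF bij_betw_orbit(1)[OF parent_cell_cell[OF w(2,1,3)]]]]
      assms(3) w(4,5) by (simp add: cell_Cons)
qed

lemma inj_on_cell: "inj_on cell (Gdk d k)"
proof
  fix w v assume "w \<in> Gdk d k" "v \<in> Gdk d k" "cell w = cell v"
  then show "w = v"
  proof (induction w arbitrary: v)
    case Nil
    then show ?case using cell_Cons_neq_root by (metis cell_Nil neq_Nil_conv surj_pair)
  next
    case (Cons a w)
    obtain i l where a: "a = (i,l)" by fastforce
    obtain i' l' v' where v: "v = (i',l') # v'"
      using Cons.prems cell_Cons_neq_root a by (metis cell_Nil neq_Nil_conv surj_pair)
    have i: "i' = i" and "cell v' = cell w"
      using cell_Cons_eq_cell_Cons Cons.prems a v by blast+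
    then have "v' = w" using Cons.IH[of v'] Cons.prems(1,2) a v by (simp add: Cons_mem_Gdk)
    then have "l' = l" using cell_Cons_eq_exponent Cons.prems a v i by blast
    then show ?case using a v i \<open>v' = w\<close> by simp
  qed
qed

lemma cell_eq_iff: "g \<in> Gdk d k \<Longrightarrow> h \<in> Gdk d k \<Longrightarrow> cell g = cell h \<longleftrightarrow> g = h"
  using inj_on_cell by (auto dest: inj_onD)

lemma ext_face_eq_face_cell: "ext_face d k s \<Longrightarrow> \<exists>w \<in> Gdk d k. \<exists>i \<le> d. s = face (cell w) i"
proof (induction rule: ext_face.induct)
  case (ext_root u)
  have "root_simplex d |-| {|u|} = face (cell []) (\<Gamma> u)"
    using face_color[OF cell_root ext_root] by (simp add: cell_Nil)
  then show ?case using color_le[OF cell_root ext_root] Nil_mem_Gdk by blast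
next
  case (ext_step s j u)
  then obtain w i where "w \<in> Gdk d k" "i \<le> d" "s = face (cell w) i" by blast
  moreover have "new_cell s j \<in> delta d k s" using new_cell_mem_delta ext_step by blast
  ultimately obtain w' where w': "w' \<in> Gdk d k" "cell w' = new_cell s j"
    using delta_face_cell_subset by blast
  have u: "u |\<in>| cell w'" "u \<noteq> New s j" using w'(2) ext_step New_notin by auto
  have "face (cell w') (\<Gamma> u) = new_cell s j |-| {|u|}"
    using face_color[OF dcell_cell[OF w'(1)] u(1)] w'(2) by simp
  also have "\<dots> = finsert (New s j) (s |-| {|u|})" using u(2) by auto
  finally show ?case using w'(1) color_le[OF dcell_cell[OF w'(1)] u(1)] by metis
qed

lemma dcell_mem_cell_image: "dcell d k t \<Longrightarrow> t \<in> cell ` Gdk d k"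
proof (induction rule: dcell.induct)
  case cell_root
  then show ?case using Nil_mem_Gdk cell_Nil by (metis image_eqI)
next
  case (cell_new s j)
  then obtain w i where "w \<in> Gdk d k" "i \<le> d" "s = face (cell w) i"
    using ext_face_eq_face_cell by blast
  moreover have "new_cell s j \<in> delta d k s" using new_cell_mem_delta cell_new by blast
  ultimately show ?case using delta_face_cell_subset by blast
qed

lemma cay_adj_iff_line_adj:
  assumes g: "g \<in> Gdk d k" and h: "h \<in> Gdk d k"
  shows "cay_adj d k g h \<longleftrightarrow> line_adj d k (cell g) (cell h)"
proof
  assume "cay_adj d k g h"
  then obtain i l where il: "i \<le> d" "1 \<le> l" "l \<le> k-1" and hg: "h = gmult k (i,l) g"
    by (auto simp: cay_adj_def gens_def)
  then have "h \<noteq> g" using gmult_eq_self_iff[OF g] by simp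
  then have "cell g \<noteq> cell h" using cell_eq_iff[OF g h] by simp
  moreover have "cell h \<in> delta d k (face (cell g) i)"
    unfolding delta_face_cell[OF g il(1)] using hg il k_pos by (intro rev_image_eqI[of l]) auto
  then have "face (cell g) i |\<subseteq>| cell h" by (simp add: delta_def)
  ultimately show "line_adj d k (cell g) (cell h)"
    using dm1cell_face[OF dcell_cell[OF g] il(1)] face_col_subset dcell_cell[OF g] dcell_cell[OF h]
    unfolding line_adj_def by blast
next
  assume "line_adj d k (cell g) (cell h)"
  then obtain s where s: "dm1cell d k s" "s |\<subseteq>| cell g" "s |\<subseteq>| cell h"
    and ne: "cell g \<noteq> cell h" unfolding line_adj_def by blast
  obtain i where i: "i \<le> d" "s = face (cell g) i" using dm1cell_eq_face dcell_cell g s(1,2) .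
  then have "cell h \<in> delta d k (face (cell g) i)" using dcell_cell[OF h] s(3) by (simp add: delta_def)
  then obtain m where m: "m < k" "cell h = cell (gmult k (i,m) g)"
    unfolding delta_face_cell[OF g i(1)] by auto
  then have hg: "h = gmult k (i,m) g" using cell_eq_iff[OF h gmult_mem_Gdk[OF k_pos i(1) g]] by simp
  then have "m \<noteq> 0" using ne gmult_eq_self_iff[OF g, of i 0] by auto
  then have "(i,m) \<in> gens d k" using i(1) m(1) by (simp add: gens_def)
  then show "cay_adj d k g h" using g h hg unfolding cay_adj_def by blast
qed

end

theorem corollary5:
  fixes d k :: nat and \<Gamma> :: "vtx \<Rightarrow> nat"
    and \<Omega> :: "vtx fset \<Rightarrow> int \<Rightarrow> vtx fset \<Rightarrow> vtx fset"
  assumes "d \<ge> 1" and "k \<ge> 1"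
    and "coloring d k \<Gamma>" and "k_ordering d k \<Omega>"
  shows "bij_betw (\<lambda>g. word_act \<Gamma> \<Omega> g (root_simplex d)) (Gdk d k) {t. dcell d k t}
       \<and> (\<forall>g \<in> Gdk d k. \<forall>h \<in> Gdk d k. cay_adj d k g h \<longleftrightarrow>
            line_adj d k (word_act \<Gamma> \<Omega> g (root_simplex d)) (word_act \<Gamma> \<Omega> h (root_simplex d)))"
proof -
  interpret arboreal_action d k \<Gamma> \<Omega>
    by unfold_locales (use assms in simp_all)
  have "bij_betw cell (Gdk d k) {t. dcell d k t}"
    unfolding bij_betw_def using inj_on_cell dcell_cell dcell_mem_cell_image by blast
  then show ?thesis using cay_adj_iff_line_adj by blast
qed

end
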